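(* Let $(I,=_I,\neq_I;K)$ be a completely separated set and $\boldsymbol S=(\lambda_0,\lambda_1;\phi_0,\phi_1)$ a family of completely separated sets over it, with $\phi_0(i)=F_i$. Let $\bigotimes_{i\in I}F_i:=\{f_i\circ\mathrm{pr}_i\mid i\in I,\ f_i\in F_i\}$, where $\mathrm{pr}_i(\Theta):=\Theta_i$. Then $$\Big(\prod_{i\in I}\lambda_0(i),\ =_{\prod},\ \neq_{\prod};\ \bigotimes_{i\in I}F_i\Big)$$ is a completely separated set; in particular $\Theta\neq_{\prod}\Theta'\Leftrightarrow\Theta\neq_{(\prod_{i\in I}\lambda_0(i),\bigotimes_{i\in I}F_i)}\Theta'$.
   Context: Setting: constructive (Bishop-style) mathematics with intuitionistic logic. Sets carry an equality; functions respect equalities; $\mathbb F(X)$ = functions $X\to\mathbb R$ with pointwise equality; an extensional subset of $\mathbb F(X)$ is $\{f\mid P(f)\}$ with $P$ respecting $=_{\mathbb F(X)}$. $a\neq_{\mathbb R}b:\Leftrightarrow|a-b|>0$. An inequality $\neq_X$ satisfies $x=_Xy\ \&\ x\neq_Xy\Rightarrow\bot$. Strongly extensional: $f(x)\neq f(y)\Rightarrow x\neq y$. Induced relations: $x=_{(X,F)}x':\Leftrightarrow\forall_{f\in F}f(x)=f(x')$, $x\neq_{(X,F)}x':\Leftrightarrow\exists_{f\in F}f(x)\neq_{\mathbb R}f(x')$. A completely separated set $(X,=_X,\neq_X;F)$: $F$ extensional subset of $\mathbb F(X)$, $\neq_X\Leftrightarrow\neq_{(X,F)}$ and $x=_{(X,F)}x'\Rightarrow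 x=_Xx'$. Family of sets with an inequality over $(I,=_I,\neq_I)$: $i\mapsto(\lambda_0(i),=_{\lambda_0(i)},\neq_{\lambda_0(i)})$ and strongly extensional $\lambda_{ij}:\lambda_0(i)\to\lambda_0(j)$ for $i=_Ij$, with $\lambda_{ii}=\mathrm{id}$ and $\lambda_{jk}\circ\lambda_{ij}=\lambda_{ik}$ whenever $i=_Ij=_Ik$. Family of completely separated sets over completely separated $(I,=_I,\neq_I;K)$: additionally extensional $F_i\subseteq\mathbb F(\lambda_0(i))$ and functions $\phi_{ij}:F_i\to F_j$ ($i=_Ij$) with (a) $\neq_{\lambda_0(i)}\Leftrightarrow\neq_{(\lambda_0(i),F_i)}$, (b) $x=_{(\lambda_0(i),F_i)}x'\Rightarrow x=_{\lambda_0(i)}x'$, (c) $\phi_{ij}(f)=f\circ\lambda_{ji}$ for $f\in F_i$, $i=_Ij$. Pi-set $\prod_{i\in I}\lambda_0(i)$: dependent assignments $\Theta$ with $\Theta_i\in\lambda_0(i)$ for every $i$ and $\Theta_j=_{\lambda_0(j)}\lambda_{ij}(\Theta_i)$ whenever $i=_Ij$; $\Theta=_{\prod}\Theta':\Leftrightarrow\forall_i\Theta_i=_{\lambda_0(i)}\Theta'_i$; $\Theta\neq_{\prod}\Theta':\Leftrightarrow\exists_i\Theta_i\neq_{\lambda_0(i)}\Theta'_i$. *)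

theory Defs
  imports Main "HOL.Real"
begin

definition set_with_ineq :: "'a set \<Rightarrow> ('a \<Rightarrow> 'a \<Rightarrow> bool) \<Rightarrow> ('a \<Rightarrow> 'a \<Rightarrow> bool) \<Rightarrow> bool" where
  "set_with_ineq X eq neq \<longleftrightarrow>
     (\<forall>x\<in>X. eq x x) \<and>
     (\<forall>x\<in>X. \<forall>y\<in>X. eq x y \<longrightarrow> eq y x) \<and>
     (\<forall>x\<in>X. \<forall>y\<in>X. \<forall>z\<in>X. eq x y \<longrightarrow> eq y z \<longrightarrow> eq x z) \<and>
     (\<forall>x\<in>X. \<forall>y\<in>X. eq x y \<longrightarrow> neq x y \<longrightarrow> False)"

definition neq_real :: "real \<Rightarrow> real \<Rightarrow> bool" where
  "neq_real a b \<longleftrightarrow> \<bar>a - b\<bar> > 0"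

definition real_fun_on :: "'a set \<Rightarrow> ('a \<Rightarrow> 'a \<Rightarrow> bool) \<Rightarrow> ('a \<Rightarrow> real) \<Rightarrow> bool" where
  "real_fun_on X eq f \<longleftrightarrow> (\<forall>x\<in>X. \<forall>y\<in>X. eq x y \<longrightarrow> f x = f y)"

definition extensional_subset :: "'a set \<Rightarrow> ('a \<Rightarrow> 'a \<Rightarrow> bool) \<Rightarrow> ('a \<Rightarrow> real) set \<Rightarrow> bool" where
  "extensional_subset X eq F \<longleftrightarrow>
     (\<forall>f\<in>F. real_fun_on X eq f) \<and>
     (\<forall>f\<in>F. \<forall>g. real_fun_on X eq g \<and> (\<forall>x\<in>X. g x = f x) \<longrightarrow> g \<in> F)"

definition induced_eq :: "('a \<Rightarrow> real) set \<Rightarrow> 'a \<Rightarrow> 'a \<Rightarrow> bool" where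
  "induced_eq F x x' \<longleftrightarrow> (\<forall>f\<in>F. f x = f x')"

definition induced_neq :: "('a \<Rightarrow> real) set \<Rightarrow> 'a \<Rightarrow> 'a \<Rightarrow> bool" where
  "induced_neq F x x' \<longleftrightarrow> (\<exists>f\<in>F. neq_real (f x) (f x'))"

definition completely_separated ::
  "'a set \<Rightarrow> ('a \<Rightarrow> 'a \<Rightarrow> bool) \<Rightarrow> ('a \<Rightarrow> 'a \<Rightarrow> bool) \<Rightarrow> ('a \<Rightarrow> real) set \<Rightarrow> bool" where
  "completely_separated X eq neq F \<longleftrightarrow>
     set_with_ineq X eq neq \<and> extensional_subset X eq F \<and>
     (\<forall>x\<in>X. \<forall>x'\<in>X. neq x x' \<longleftrightarrow> induced_neq F x x') \<and>
     (\<forall>x\<in>X. \<forall>x'\<in>X. induced_eq F x x' \<longrightarrow> eq x x')"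

definition family_with_ineq ::
  "'i set \<Rightarrow> ('i \<Rightarrow> 'i \<Rightarrow> bool) \<Rightarrow> ('i \<Rightarrow> 'a set) \<Rightarrow> ('i \<Rightarrow> 'a \<Rightarrow> 'a \<Rightarrow> bool)
    \<Rightarrow> ('i \<Rightarrow> 'a \<Rightarrow> 'a \<Rightarrow> bool) \<Rightarrow> ('i \<Rightarrow> 'i \<Rightarrow> 'a \<Rightarrow> 'a) \<Rightarrow> bool" where
  "family_with_ineq I eqI lam0 eqs neqs lam1 \<longleftrightarrow>
     (\<forall>i\<in>I. set_with_ineq (lam0 i) (eqs i) (neqs i)) \<and>
     (\<forall>i\<in>I. \<forall>j\<in>I. eqI i j \<longrightarrow>
        (\<forall>x\<in>lam0 i. lam1 i j x \<in> lam0 j) \<and>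
        (\<forall>x\<in>lam0 i. \<forall>y\<in>lam0 i. eqs i x y \<longrightarrow> eqs j (lam1 i j x) (lam1 i j y)) \<and>
        (\<forall>x\<in>lam0 i. \<forall>y\<in>lam0 i. neqs j (lam1 i j x) (lam1 i j y) \<longrightarrow> neqs i x y)) \<and>
     (\<forall>i\<in>I. \<forall>x\<in>lam0 i. eqs i (lam1 i i x) x) \<and>
     (\<forall>i\<in>I. \<forall>j\<in>I. \<forall>k\<in>I. eqI i j \<longrightarrow> eqI j k \<longrightarrow>
        (\<forall>x\<in>lam0 i. eqs k (lam1 j k (lam1 i j x)) (lam1 i k x)))"

definition family_compl_sep ::
  "'i set \<Rightarrow> ('i \<Rightarrow> 'i \<Rightarrow> bool) \<Rightarrow> ('i \<Rightarrow> 'a set) \<Rightarrow> ('i \<Rightarrow> 'a \<Rightarrow> 'a \<Rightarrow> bool)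
    \<Rightarrow> ('i \<Rightarrow> 'a \<Rightarrow> 'a \<Rightarrow> bool) \<Rightarrow> ('i \<Rightarrow> 'i \<Rightarrow> 'a \<Rightarrow> 'a)
    \<Rightarrow> ('i \<Rightarrow> ('a \<Rightarrow> real) set) \<Rightarrow> ('i \<Rightarrow> 'i \<Rightarrow> ('a \<Rightarrow> real) \<Rightarrow> ('a \<Rightarrow> real)) \<Rightarrow> bool" where
  "family_compl_sep I eqI lam0 eqs neqs lam1 F phi \<longleftrightarrow>
     family_with_ineq I eqI lam0 eqs neqs lam1 \<and>
     (\<forall>i\<in>I. extensional_subset (lam0 i) (eqs i) (F i)) \<and>
     (\<forall>i\<in>I. \<forall>j\<in>I. eqI i j \<longrightarrow> (\<forall>f\<in>F i. phi i j f \<in> F j)) \<and>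
     (\<forall>i\<in>I. \<forall>x\<in>lam0 i. \<forall>x'\<in>lam0 i. neqs i x x' \<longleftrightarrow> induced_neq (F i) x x') \<and>
     (\<forall>i\<in>I. \<forall>x\<in>lam0 i. \<forall>x'\<in>lam0 i. induced_eq (F i) x x' \<longrightarrow> eqs i x x') \<and>
     (\<forall>i\<in>I. \<forall>j\<in>I. eqI i j \<longrightarrow>
        (\<forall>f\<in>F i. \<forall>y\<in>lam0 j. phi i j f y = f (lam1 j i y)))"

definition pi_set ::
  "'i set \<Rightarrow> ('i \<Rightarrow> 'i \<Rightarrow> bool) \<Rightarrow> ('i \<Rightarrow> 'a set) \<Rightarrow> ('i \<Rightarrow> 'a \<Rightarrow> 'a \<Rightarrow> bool)
    \<Rightarrow> ('i \<Rightarrow> 'i \<Rightarrow> 'a \<Rightarrow> 'a) \<Rightarrow> ('i \<Rightarrow> 'a) set" where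
  "pi_set I eqI lam0 eqs lam1 =
     {\<Theta>. (\<forall>i\<in>I. \<Theta> i \<in> lam0 i) \<and>
          (\<forall>i\<in>I. \<forall>j\<in>I. eqI i j \<longrightarrow> eqs j (\<Theta> j) (lam1 i j (\<Theta> i)))}"

definition pi_eq :: "'i set \<Rightarrow> ('i \<Rightarrow> 'a \<Rightarrow> 'a \<Rightarrow> bool) \<Rightarrow> ('i \<Rightarrow> 'a) \<Rightarrow> ('i \<Rightarrow> 'a) \<Rightarrow> bool" where
  "pi_eq I eqs \<Theta> \<Theta>' \<longleftrightarrow> (\<forall>i\<in>I. eqs i (\<Theta> i) (\<Theta>' i))"

definition pi_neq :: "'i set \<Rightarrow> ('i \<Rightarrow> 'a \<Rightarrow> 'a \<Rightarrow> bool) \<Rightarrow> ('i \<Rightarrow> 'a) \<Rightarrow> ('i \<Rightarrow> 'a) \<Rightarrow> bool" where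
  "pi_neq I neqs \<Theta> \<Theta>' \<longleftrightarrow> (\<exists>i\<in>I. neqs i (\<Theta> i) (\<Theta>' i))"

text \<open>The tensor of the F_i: functions on the Pi-set that equal f_i o pr_i
 (pointwise on the Pi-set) for some i in I and f_i in F_i.\<close>
definition tensor_funs ::
  "'i set \<Rightarrow> ('i \<Rightarrow> 'i \<Rightarrow> bool) \<Rightarrow> ('i \<Rightarrow> 'a set) \<Rightarrow> ('i \<Rightarrow> 'a \<Rightarrow> 'a \<Rightarrow> bool)
    \<Rightarrow> ('i \<Rightarrow> 'i \<Rightarrow> 'a \<Rightarrow> 'a) \<Rightarrow> ('i \<Rightarrow> ('a \<Rightarrow> real) set) \<Rightarrow> (('i \<Rightarrow> 'a) \<Rightarrow> real) set" where
  "tensor_funs I eqI lam0 eqs lam1 F =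
     {g. \<exists>i\<in>I. \<exists>f\<in>F i. \<forall>\<Theta>\<in>pi_set I eqI lam0 eqs lam1. g \<Theta> = f (\<Theta> i)}"

end

theory Submission
  imports Defs
begin

text \<open>Everything is checked coordinatewise: an element of the tensor is a coordinate
  function \<open>f \<circ> pr\<^sub>i\<close>, so two dependent assignments are separated (identified) by the
  tensor exactly when some (every) coordinate is separated (identified) by the \<open>F\<^sub>i\<close>.
  Neither the transport maps nor the complete separation of the index set is needed.\<close>

lemma pi_set_memD:
  "\<Theta> \<in> pi_set I eqI lam0 eqs lam1 \<Longrightarrow> i \<in> I \<Longrightarrow> \<Theta> i \<in> lam0 i"
  by (simp add: pi_set_def)

lemma tensor_funsI:
  "i \<in> I \<Longrightarrow> f \<in> F i \<Longrightarrow> (\<lambda>\<Theta>. f (\<Theta> i)) \<in> tensor_funs I eqI lam0 eqs lam1 F"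
  unfolding tensor_funs_def by blast

lemma tensor_funsE:
  assumes "g \<in> tensor_funs I eqI lam0 eqs lam1 F"
  obtains i f where "i \<in> I" "f \<in> F i" "\<And>\<Theta>. \<Theta> \<in> pi_set I eqI lam0 eqs lam1 \<Longrightarrow> g \<Theta> = f (\<Theta> i)"
  using assms unfolding tensor_funs_def by blast

lemma set_with_ineq_pi_set:
  assumes "\<And>i. i \<in> I \<Longrightarrow> set_with_ineq (lam0 i) (eqs i) (neqs i)"
  shows "set_with_ineq (pi_set I eqI lam0 eqs lam1) (pi_eq I eqs) (pi_neq I neqs)"
proof -
  let ?P = "pi_set I eqI lam0 eqs lam1"
  have refl: "eqs i (\<Theta> i) (\<Theta> i)" if "\<Theta> \<in> ?P" "i \<in> I" for \<Theta> i
    using assms[OF that(2)] pi_set_memD[OF that] unfolding set_with_ineq_def by blast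
  have sym: "eqs i (\<Theta>' i) (\<Theta> i)"
    if "\<Theta> \<in> ?P" "\<Theta>' \<in> ?P" "i \<in> I" "eqs i (\<Theta> i) (\<Theta>' i)" for \<Theta> \<Theta>' i
    using assms[OF that(3)] pi_set_memD[OF that(1,3)] pi_set_memD[OF that(2,3)] that(4)
    unfolding set_with_ineq_def by blast
  have trans: "eqs i (\<Theta> i) (\<Theta>'' i)"
    if "\<Theta> \<in> ?P" "\<Theta>' \<in> ?P" "\<Theta>'' \<in> ?P" "i \<in> I"
      "eqs i (\<Theta> i) (\<Theta>' i)" "eqs i (\<Theta>' i) (\<Theta>'' i)" for \<Theta> \<Theta>' \<Theta>'' i
    using assms[OF that(4)] pi_set_memD[OF that(1,4)] pi_set_memD[OF that(2,4)]
      pi_set_memD[OF that(3,4)] that(5,6)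
    unfolding set_with_ineq_def by blast
  have apart: False
    if "\<Theta> \<in> ?P" "\<Theta>' \<in> ?P" "i \<in> I" "eqs i (\<Theta> i) (\<Theta>' i)" "neqs i (\<Theta> i) (\<Theta>' i)"
    for \<Theta> \<Theta>' i
    using assms[OF that(3)] pi_set_memD[OF that(1,3)] pi_set_memD[OF that(2,3)] that(4,5)
    unfolding set_with_ineq_def by blast
  show ?thesis
    unfolding set_with_ineq_def pi_eq_def pi_neq_def
    using refl sym trans apart by blast
qed

lemma extensional_subset_tensor_funs:
  assumes "\<And>i. i \<in> I \<Longrightarrow> extensional_subset (lam0 i) (eqs i) (F i)"
  shows "extensional_subset (pi_set I eqI lam0 eqs lam1) (pi_eq I eqs)
           (tensor_funs I eqI lam0 eqs lam1 F)"
  unfolding extensional_subset_def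
proof (intro conjI ballI allI impI)
  fix g assume "g \<in> tensor_funs I eqI lam0 eqs lam1 F"
  then obtain i f where i: "i \<in> I" and f: "f \<in> F i"
    and g: "\<And>\<Theta>. \<Theta> \<in> pi_set I eqI lam0 eqs lam1 \<Longrightarrow> g \<Theta> = f (\<Theta> i)"
    by (rule tensor_funsE) blast
  have "real_fun_on (lam0 i) (eqs i) f"
    using assms[OF i] f unfolding extensional_subset_def by blast
  then show "real_fun_on (pi_set I eqI lam0 eqs lam1) (pi_eq I eqs) g"
    using i g pi_set_memD unfolding real_fun_on_def pi_eq_def by metis
next
  fix f g
  assume "f \<in> tensor_funs I eqI lam0 eqs lam1 F"
    and "real_fun_on (pi_set I eqI lam0 eqs lam1) (pi_eq I eqs) g \<and>
         (\<forall>\<Theta>\<in>pi_set I eqI lam0 eqs lam1. g \<Theta> = f \<Theta>)"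
  then show "g \<in> tensor_funs I eqI lam0 eqs lam1 F"
    unfolding tensor_funs_def by auto
qed

lemma pi_neq_iff_induced_neq_tensor_funs:
  assumes neq: "\<And>i x x'. i \<in> I \<Longrightarrow> x \<in> lam0 i \<Longrightarrow> x' \<in> lam0 i \<Longrightarrow>
                  neqs i x x' \<longleftrightarrow> induced_neq (F i) x x'"
    and \<Theta>: "\<Theta> \<in> pi_set I eqI lam0 eqs lam1" and \<Theta>': "\<Theta>' \<in> pi_set I eqI lam0 eqs lam1"
  shows "pi_neq I neqs \<Theta> \<Theta>' \<longleftrightarrow> induced_neq (tensor_funs I eqI lam0 eqs lam1 F) \<Theta> \<Theta>'"
proof
  assume "pi_neq I neqs \<Theta> \<Theta>'"
  then obtain i where i: "i \<in> I" and "neqs i (\<Theta> i) (\<Theta>' i)"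
    unfolding pi_neq_def by blast
  then obtain f where "f \<in> F i" and "neq_real (f (\<Theta> i)) (f (\<Theta>' i))"
    using neq[OF i pi_set_memD[OF \<Theta> i] pi_set_memD[OF \<Theta>' i]]
    unfolding induced_neq_def by blast
  then show "induced_neq (tensor_funs I eqI lam0 eqs lam1 F) \<Theta> \<Theta>'"
    unfolding induced_neq_def using tensor_funsI[OF i] by fastforce
next
  assume "induced_neq (tensor_funs I eqI lam0 eqs lam1 F) \<Theta> \<Theta>'"
  then obtain g where g_in: "g \<in> tensor_funs I eqI lam0 eqs lam1 F"
    and g_neq: "neq_real (g \<Theta>) (g \<Theta>')"
    unfolding induced_neq_def by blast
  from g_in obtain i f where i: "i \<in> I" and f: "f \<in> F i"
    and g: "\<And>\<Psi>. \<Psi> \<in> pi_set I eqI lam0 eqs lam1 \<Longrightarrow> g \<Psi> = f (\<Psi> i)"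
    by (rule tensor_funsE) blast
  have "induced_neq (F i) (\<Theta> i) (\<Theta>' i)"
    unfolding induced_neq_def using f g_neq g[OF \<Theta>] g[OF \<Theta>'] by auto
  then show "pi_neq I neqs \<Theta> \<Theta>'"
    using neq[OF i pi_set_memD[OF \<Theta> i] pi_set_memD[OF \<Theta>' i]] i
    unfolding pi_neq_def by blast
qed

lemma induced_eq_tensor_funs_imp_pi_eq:
  assumes eq: "\<And>i x x'. i \<in> I \<Longrightarrow> x \<in> lam0 i \<Longrightarrow> x' \<in> lam0 i \<Longrightarrow>
                 induced_eq (F i) x x' \<Longrightarrow> eqs i x x'"
    and \<Theta>: "\<Theta> \<in> pi_set I eqI lam0 eqs lam1" and \<Theta>': "\<Theta>' \<in> pi_set I eqI lam0 eqs lam1"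
    and \<Theta>\<Theta>': "induced_eq (tensor_funs I eqI lam0 eqs lam1 F) \<Theta> \<Theta>'"
  shows "pi_eq I eqs \<Theta> \<Theta>'"
  unfolding pi_eq_def
proof
  fix i assume i: "i \<in> I"
  have "induced_eq (F i) (\<Theta> i) (\<Theta>' i)"
    using \<Theta>\<Theta>' tensor_funsI[OF i] unfolding induced_eq_def by fastforce
  then show "eqs i (\<Theta> i) (\<Theta>' i)"
    using eq[OF i pi_set_memD[OF \<Theta> i] pi_set_memD[OF \<Theta>' i]] by blast
qed

lemma completely_separated_pi_set:
  assumes "\<And>i. i \<in> I \<Longrightarrow> completely_separated (lam0 i) (eqs i) (neqs i) (F i)"
  shows "completely_separated (pi_set I eqI lam0 eqs lam1) (pi_eq I eqs) (pi_neq I neqs)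
           (tensor_funs I eqI lam0 eqs lam1 F)"
  unfolding completely_separated_def
proof (intro conjI ballI impI)
  show "set_with_ineq (pi_set I eqI lam0 eqs lam1) (pi_eq I eqs) (pi_neq I neqs)"
    using assms by (intro set_with_ineq_pi_set) (simp add: completely_separated_def)
  show "extensional_subset (pi_set I eqI lam0 eqs lam1) (pi_eq I eqs)
          (tensor_funs I eqI lam0 eqs lam1 F)"
    using assms by (intro extensional_subset_tensor_funs) (simp add: completely_separated_def)
next
  fix \<Theta> \<Theta>' assume "\<Theta> \<in> pi_set I eqI lam0 eqs lam1" "\<Theta>' \<in> pi_set I eqI lam0 eqs lam1"
  then show "pi_neq I neqs \<Theta> \<Theta>' \<longleftrightarrow> induced_neq (tensor_funs I eqI lam0 eqs lam1 F) \<Theta> \<Theta>'"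
    using assms by (intro pi_neq_iff_induced_neq_tensor_funs) (auto simp: completely_separated_def)
next
  fix \<Theta> \<Theta>'
  assume "\<Theta> \<in> pi_set I eqI lam0 eqs lam1" "\<Theta>' \<in> pi_set I eqI lam0 eqs lam1"
    and "induced_eq (tensor_funs I eqI lam0 eqs lam1 F) \<Theta> \<Theta>'"
  then show "pi_eq I eqs \<Theta> \<Theta>'"
    using assms by (intro induced_eq_tensor_funs_imp_pi_eq) (auto simp: completely_separated_def)
qed

lemma family_compl_sep_fibre_completely_separated:
  assumes "family_compl_sep I eqI lam0 eqs neqs lam1 F phi" and "i \<in> I"
  shows "completely_separated (lam0 i) (eqs i) (neqs i) (F i)"
  using assms by (simp add: family_compl_sep_def family_with_ineq_def completely_separated_def)

theorem proposition4p5: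
  fixes I :: "'i set" and eqI neqI :: "'i \<Rightarrow> 'i \<Rightarrow> bool" and K :: "('i \<Rightarrow> real) set"
    and lam0 :: "'i \<Rightarrow> 'a set" and eqs neqs :: "'i \<Rightarrow> 'a \<Rightarrow> 'a \<Rightarrow> bool"
    and lam1 :: "'i \<Rightarrow> 'i \<Rightarrow> 'a \<Rightarrow> 'a"
    and F :: "'i \<Rightarrow> ('a \<Rightarrow> real) set"
    and phi :: "'i \<Rightarrow> 'i \<Rightarrow> ('a \<Rightarrow> real) \<Rightarrow> ('a \<Rightarrow> real)"
  assumes "completely_separated I eqI neqI K"
    and "family_compl_sep I eqI lam0 eqs neqs lam1 F phi"
  shows "completely_separated (pi_set I eqI lam0 eqs lam1) (pi_eq I eqs) (pi_neq I neqs)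
           (tensor_funs I eqI lam0 eqs lam1 F)"
  using family_compl_sep_fibre_completely_separated[OF assms(2)]
  by (rule completely_separated_pi_set)

end
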